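(* Let $p\in\mathcal{P}$ and $\varphi\in\mathrm{Stab}_{G^*}(p)$. Then: (i) if $\varphi\in G$, all orbits of $\langle\varphi\rangle$ on $I$ have the same size $b=|\varphi|$ (the order of $\varphi$), and if $r$ is the number of orbits then $br=2n$; (ii) if $\varphi\in G^*\setminus G$, all orbits of $\langle\varphi\rangle$ on $I$ have the same size $b=|\varphi|$, $b$ is even, and if $r$ is the number of orbits then $br=2n$.
   Context: Fix $n\ge 2$, $W=\{1,\dots,n\}$, $M=\{n+1,\dots,2n\}$, $I=W\cup M$. Permutations compose right-to-left. A preference profile is a function $p$ on $I$ assigning to each $x\in W$ a linear order $p(x)$ on $M$ and to each $y\in M$ a linear order $p(y)$ on $W$; $\mathcal{P}$ is the set of preference profiles. $G^*=\{\varphi\in\mathrm{Sym}(I):\{\varphi(W),\varphi(M)\}=\{W,M\}\}$ and $G=\{\varphi\in\mathrm{Sym}(I):\varphi(W)=W,\ \varphi(M)=M\}$. For a linear order $R$ on $X\subseteq I$ and $\varphi\in\mathrm{Sym}(I)$, $\varphi R$ is the relation on $\varphi(X)$ with $(a,b)\in\varphi R$ iff $(\varphi^{-1}(a),\varphi^{-1}(b))\in R$. For $\varphi\in G^*$, $p^\varphi(z)=\varphi\,p(\varphi^{-1}(z))$, and $\mathrm{Stab}_{G^*}(p)=\{\varphi\in G^*:p^\varphi=p\}$. *)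

theory Defs
  imports "HOL-Combinatorics.Permutations"
begin

text \<open>Linear orders are (reflexive) library linear orders on the given carrier.\<close>

definition Wset :: "nat \<Rightarrow> nat set" where "Wset n = {1..n}"
definition Mset :: "nat \<Rightarrow> nat set" where "Mset n = {n+1..2*n}"
definition Iset :: "nat \<Rightarrow> nat set" where "Iset n = Wset n \<union> Mset n"

definition is_profile :: "nat \<Rightarrow> (nat \<Rightarrow> nat rel) \<Rightarrow> bool" where
  "is_profile n p \<longleftrightarrow>
     (\<forall>x\<in>Wset n. linear_order_on (Mset n) (p x)) \<and>
     (\<forall>y\<in>Mset n. linear_order_on (Wset n) (p y))"

definition Gstar :: "nat \<Rightarrow> (nat \<Rightarrow> nat) set" where
  "Gstar n = {\<phi>. \<phi> permutes Iset n \<and>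
     ((\<phi> ` Wset n = Wset n \<and> \<phi> ` Mset n = Mset n) \<or>
      (\<phi> ` Wset n = Mset n \<and> \<phi> ` Mset n = Wset n))}"

definition Gsub :: "nat \<Rightarrow> (nat \<Rightarrow> nat) set" where
  "Gsub n = {\<phi>. \<phi> permutes Iset n \<and> \<phi> ` Wset n = Wset n \<and> \<phi> ` Mset n = Mset n}"

definition act_rel :: "(nat \<Rightarrow> nat) \<Rightarrow> nat rel \<Rightarrow> nat rel" where
  "act_rel \<phi> R = {(a, b). (inv \<phi> a, inv \<phi> b) \<in> R}"

definition act_profile :: "(nat \<Rightarrow> nat) \<Rightarrow> (nat \<Rightarrow> nat rel) \<Rightarrow> (nat \<Rightarrow> nat rel)" where
  "act_profile \<phi> p = (\<lambda>z. act_rel \<phi> (p (inv \<phi> z)))"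

text \<open>Stabiliser; profiles are only meaningful on I, so equality is required on I.\<close>
definition Stab :: "nat \<Rightarrow> (nat \<Rightarrow> nat rel) \<Rightarrow> (nat \<Rightarrow> nat) set" where
  "Stab n p = {\<phi> \<in> Gstar n. \<forall>z\<in>Iset n. act_profile \<phi> p z = p z}"

definition perm_ord :: "(nat \<Rightarrow> nat) \<Rightarrow> nat" where
  "perm_ord \<phi> = (LEAST k. 0 < k \<and> \<phi> ^^ k = id)"

definition cyc_orbit :: "(nat \<Rightarrow> nat) \<Rightarrow> nat \<Rightarrow> nat set" where
  "cyc_orbit \<phi> x = {(\<phi> ^^ k) x | k. True}"

definition cyc_orbits :: "(nat \<Rightarrow> nat) \<Rightarrow> nat set \<Rightarrow> nat set set" where
  "cyc_orbits \<phi> A = cyc_orbit \<phi> ` A"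

end

theory Submission
  imports Defs "HOL-Combinatorics.Cycles" "HOL-Combinatorics.Orbits"
begin

(* A stabiliser element \<phi> and all its powers are automorphisms of the profile. If \<phi>^k fixes
   an agent z, it preserves the linear order p(z) on the other side and so fixes that side
   pointwise, since a finite linear order has no nontrivial automorphism; repeating the argument
   with an agent of the other side shows \<phi>^k = id. Hence \<langle>\<phi>\<rangle> acts freely on I: every orbit
   has |\<phi>| elements, and the orbits partition the 2n agents. If \<phi> swaps W and M, then \<phi>^k
   maps W onto M for every odd k, while \<phi>^|\<phi>| = id, so |\<phi>| is even. *)

lemma perm_ord_of_permutation:
  assumes "permutation \<phi>"
  shows "0 < perm_ord \<phi>" and "\<phi> ^^ perm_ord \<phi> = id"
proof -
  have "\<exists>k. 0 < k \<and> \<phi> ^^ k = id"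
    using permutation_is_nilpotent[OF assms] by metis
  then show "0 < perm_ord \<phi>" "\<phi> ^^ perm_ord \<phi> = id"
    unfolding perm_ord_def by (metis (mono_tags, lifting) LeastI_ex)+
qed

lemma perm_ord_le:
  assumes "0 < k" "\<phi> ^^ k = id"
  shows "perm_ord \<phi> \<le> k"
  unfolding perm_ord_def using assms by (simp add: Least_le)

lemma cyc_orbit_eq_orbit:
  assumes "permutation \<phi>"
  shows "cyc_orbit \<phi> x = orbit \<phi> x"
  unfolding cyc_orbit_def using orbit_altdef_permutation[OF assms] by simp

lemma card_cyc_orbit_eq_least_power:
  assumes "permutation \<phi>"
  shows "card (cyc_orbit \<phi> x) = least_power \<phi> x"
proof -
  have "cyc_orbit \<phi> x = set (support \<phi> x)"
    unfolding cyc_orbit_def support_set[OF assms] by auto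
  then show ?thesis
    using distinct_card[OF cycle_of_permutation[OF assms]] by simp
qed

lemma card_cyc_orbit_eq_perm_ord:
  assumes "permutation \<phi>" and free: "\<And>k. (\<phi> ^^ k) x = x \<Longrightarrow> \<phi> ^^ k = id"
  shows "card (cyc_orbit \<phi> x) = perm_ord \<phi>"
proof -
  have "least_power \<phi> x \<le> perm_ord \<phi>"
    using least_power_le perm_ord_of_permutation[OF assms(1)] by (metis id_apply)
  moreover have "perm_ord \<phi> \<le> least_power \<phi> x"
    using least_power_of_permutation[OF assms(1)] free perm_ord_le by metis
  ultimately show ?thesis
    using card_cyc_orbit_eq_least_power[OF assms(1)] by simp
qed

lemma cyc_orbits_disjoint:
  assumes "permutation \<phi>" "cyc_orbit \<phi> x \<noteq> cyc_orbit \<phi> y"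
  shows "cyc_orbit \<phi> x \<inter> cyc_orbit \<phi> y = {}"
  using assms cyclic_on_orbit'[OF assms(1)] orbit_cyclic_eq3
  unfolding cyc_orbit_eq_orbit[OF assms(1)] by (metis disjoint_iff)

lemma cyc_orbit_self: "x \<in> cyc_orbit \<phi> x"
  unfolding cyc_orbit_def by (metis (mono_tags) funpow_0 mem_Collect_eq)

lemma Union_cyc_orbits:
  assumes "\<phi> permutes S" "finite S"
  shows "\<Union> (cyc_orbits \<phi> S) = S"
proof -
  have "permutation \<phi>"
    using assms permutation_permutes by blast
  then have "cyc_orbit \<phi> x \<subseteq> S" if "x \<in> S" for x
    using permutes_orbit_subset[OF assms(1) that] by (simp add: cyc_orbit_eq_orbit)
  then show ?thesis
    unfolding cyc_orbits_def using cyc_orbit_self by blast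
qed

lemma perm_ord_mult_card_cyc_orbits:
  assumes "\<phi> permutes S" "finite S"
    and free: "\<And>x k. x \<in> S \<Longrightarrow> (\<phi> ^^ k) x = x \<Longrightarrow> \<phi> ^^ k = id"
  shows "perm_ord \<phi> * card (cyc_orbits \<phi> S) = card S"
proof -
  have perm: "permutation \<phi>"
    using assms permutation_permutes by blast
  have "perm_ord \<phi> * card (cyc_orbits \<phi> S) = card (\<Union> (cyc_orbits \<phi> S))"
  proof (rule card_partition)
    show "finite (cyc_orbits \<phi> S)"
      unfolding cyc_orbits_def using assms(2) by simp
    show "finite (\<Union> (cyc_orbits \<phi> S))"
      unfolding Union_cyc_orbits[OF assms(1,2)] using assms(2) .
    show "card c = perm_ord \<phi>" if "c \<in> cyc_orbits \<phi> S" for c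
      using that card_cyc_orbit_eq_perm_ord[OF perm free] unfolding cyc_orbits_def by auto
    show "c1 \<inter> c2 = {}" if "c1 \<in> cyc_orbits \<phi> S" "c2 \<in> cyc_orbits \<phi> S" "c1 \<noteq> c2" for c1 c2
      using that cyc_orbits_disjoint[OF perm] unfolding cyc_orbits_def by auto
  qed
  then show ?thesis
    unfolding Union_cyc_orbits[OF assms(1,2)] .
qed

lemma funpow_image_swap:
  assumes "\<phi> ` A = B" "\<phi> ` B = A"
  shows "(\<phi> ^^ k) ` A = (if even k then A else B)"
proof (induction k)
  case (Suc k)
  have "(\<phi> ^^ Suc k) ` A = \<phi> ` (\<phi> ^^ k) ` A"
    by (simp add: image_comp)
  with Suc assms show ?case
    by simp
qed simp

lemma even_perm_ord_if_swaps:
  assumes "permutation \<phi>" "\<phi> ` A = B" "\<phi> ` B = A" "A \<noteq> B"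
  shows "even (perm_ord \<phi>)"
  using funpow_image_swap[OF assms(2,3), of "perm_ord \<phi>"] perm_ord_of_permutation(2)[OF assms(1)] assms(4)
  by (auto split: if_splits)

lemma card_under_inj_on:
  assumes "linear_order_on A R" "finite A"
  shows "inj_on (\<lambda>a. card (under R a)) A"
proof -
  have R: "R \<subseteq> A \<times> A" "\<forall>a\<in>A. (a, a) \<in> R" "trans R" "antisym R" "total_on A R"
    using assms(1) unfolding linear_order_on_def partial_order_on_def preorder_on_def refl_on_def
    by auto
  have eq: "a = a'"
    if "a' \<in> A" "(a, a') \<in> R" "card (under R a) = card (under R a')" for a a'
  proof -
    have "under R a' \<subseteq> A"
      using R(1) unfolding under_def by blast
    then have "finite (under R a')"
      using assms(2) by (rule finite_subset)
    then have "under R a = under R a'"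
      using under_incr[OF R(3) that(2)] that(3) by (rule card_subset_eq)
    moreover have "a' \<in> under R a'"
      using R(2) that(1) unfolding under_def by blast
    ultimately have "(a', a) \<in> R"
      unfolding under_def by blast
    with R(4) that(2) show ?thesis
      unfolding antisym_def by blast
  qed
  show ?thesis
  proof (rule inj_onI)
    fix a a' assume "a \<in> A" "a' \<in> A" "card (under R a) = card (under R a')"
    with R(5) eq show "a = a'"
      unfolding total_on_def by metis
  qed
qed

lemma linear_order_automorphism_id:
  assumes lin: "linear_order_on A R" and "finite A" and "inj_on \<psi> A"
    and pres: "\<And>a b. (a, b) \<in> R \<longleftrightarrow> (\<psi> a, \<psi> b) \<in> R"
  shows "\<forall>a\<in>A. \<psi> a = a"
proof
  fix a assume "a \<in> A"
  have R: "R \<subseteq> A \<times> A" "\<forall>a\<in>A. (a, a) \<in> R"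
    using lin unfolding linear_order_on_def partial_order_on_def preorder_on_def refl_on_def
    by auto
  have "\<psi> b \<in> A" if "b \<in> A" for b
    using pres[of b b] R that by auto
  then have onto: "\<psi> ` A = A"
    using assms(2,3) by (simp add: endo_inj_surj image_subsetI)
  have "under R (\<psi> a) = \<psi> ` under R a"
  proof
    show "\<psi> ` under R a \<subseteq> under R (\<psi> a)"
      using pres unfolding under_def by auto
    show "under R (\<psi> a) \<subseteq> \<psi> ` under R a"
    proof
      fix b assume "b \<in> under R (\<psi> a)"
      then have "b \<in> A" "(b, \<psi> a) \<in> R"
        using R(1) unfolding under_def by auto
      moreover obtain c where "b = \<psi> c"
        using onto \<open>b \<in> A\<close> by blast
      ultimately show "b \<in> \<psi> ` under R a"
        using pres unfolding under_def by auto
    qed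
  qed
  moreover have "under R a \<subseteq> A"
    using R(1) unfolding under_def by blast
  ultimately have "card (under R (\<psi> a)) = card (under R a)"
    using assms(3) by (simp add: card_image inj_on_subset)
  moreover have "\<psi> a \<in> A"
    using onto \<open>a \<in> A\<close> by blast
  ultimately show "\<psi> a = a"
    using inj_onD[OF card_under_inj_on[OF lin assms(2)]] \<open>a \<in> A\<close> by blast
qed

definition profile_automorphism :: "nat \<Rightarrow> (nat \<Rightarrow> nat rel) \<Rightarrow> (nat \<Rightarrow> nat) \<Rightarrow> bool" where
  "profile_automorphism n p \<psi> \<longleftrightarrow> \<psi> permutes Iset n \<and>
     (\<forall>z\<in>Iset n. \<forall>a b. (a, b) \<in> p z \<longleftrightarrow> (\<psi> a, \<psi> b) \<in> p (\<psi> z))"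

lemma Stab_imp_profile_automorphism:
  assumes "\<phi> \<in> Stab n p"
  shows "profile_automorphism n p \<phi>"
  unfolding profile_automorphism_def
proof (intro conjI ballI allI)
  show perm: "\<phi> permutes Iset n"
    using assms unfolding Stab_def Gstar_def by simp
  fix z a b assume "z \<in> Iset n"
  then have "\<phi> z \<in> Iset n"
    by (simp add: permutes_in_image[OF perm])
  then have "act_profile \<phi> p (\<phi> z) = p (\<phi> z)"
    using assms unfolding Stab_def by simp
  then have "p (\<phi> z) = act_rel \<phi> (p z)"
    unfolding act_profile_def permutes_inverses(2)[OF perm] by simp
  then show "(a, b) \<in> p z \<longleftrightarrow> (\<phi> a, \<phi> b) \<in> p (\<phi> z)"
    unfolding act_rel_def by (simp add: permutes_inverses(2)[OF perm])
qed

lemma profile_automorphism_comp: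
  assumes "profile_automorphism n p \<psi>" "profile_automorphism n p \<chi>"
  shows "profile_automorphism n p (\<psi> \<circ> \<chi>)"
  unfolding profile_automorphism_def
proof (intro conjI ballI allI)
  have perm: "\<psi> permutes Iset n" "\<chi> permutes Iset n"
    using assms unfolding profile_automorphism_def by blast+
  then show "\<psi> \<circ> \<chi> permutes Iset n"
    by (rule permutes_compose[rotated])
  fix z a b assume "z \<in> Iset n"
  moreover have "\<chi> z \<in> Iset n"
    using permutes_in_image[OF perm(2)] \<open>z \<in> Iset n\<close> by blast
  ultimately show "(a, b) \<in> p z \<longleftrightarrow> ((\<psi> \<circ> \<chi>) a, (\<psi> \<circ> \<chi>) b) \<in> p ((\<psi> \<circ> \<chi>) z)"
    using assms unfolding profile_automorphism_def comp_apply by blast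
qed

lemma profile_automorphism_funpow:
  assumes "profile_automorphism n p \<psi>"
  shows "profile_automorphism n p (\<psi> ^^ k)"
proof (induction k)
  case 0
  then show ?case
    unfolding profile_automorphism_def by (simp add: permutes_id)
next
  case (Suc k)
  then show ?case
    unfolding funpow.simps(2) by (rule profile_automorphism_comp[OF assms])
qed

lemma profile_automorphism_fixes_opposite_side:
  assumes "profile_automorphism n p \<psi>" "z \<in> Iset n" "\<psi> z = z"
    and "linear_order_on A (p z)" "finite A"
  shows "\<forall>a\<in>A. \<psi> a = a"
proof (rule linear_order_automorphism_id[OF assms(4,5)])
  have "\<psi> permutes Iset n"
    using assms(1) unfolding profile_automorphism_def by blast
  then show "inj_on \<psi> A"
    by (rule permutes_inj_on)
  have "(a, b) \<in> p z \<longleftrightarrow> (\<psi> a, \<psi> b) \<in> p (\<psi> z)" for a b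
    using assms(1,2) unfolding profile_automorphism_def by blast
  then show "(a, b) \<in> p z \<longleftrightarrow> (\<psi> a, \<psi> b) \<in> p z" for a b
    unfolding assms(3) .
qed

lemma profile_automorphism_fixed_point_imp_id:
  assumes "is_profile n p" "0 < n" "profile_automorphism n p \<psi>"
    and "x \<in> Iset n" "\<psi> x = x"
  shows "\<psi> = id"
proof -
  have fin: "finite (Wset n)" "finite (Mset n)"
    unfolding Wset_def Mset_def by simp_all
  have W: "1 \<in> Wset n" "1 \<in> Iset n" and M: "n + 1 \<in> Mset n" "n + 1 \<in> Iset n"
    using assms(2) unfolding Iset_def Wset_def Mset_def by simp_all
  have lin: "\<And>x. x \<in> Wset n \<Longrightarrow> linear_order_on (Mset n) (p x)"
    "\<And>y. y \<in> Mset n \<Longrightarrow> linear_order_on (Wset n) (p y)"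
    using assms(1) unfolding is_profile_def by simp_all
  note fixes_side = profile_automorphism_fixes_opposite_side[OF assms(3)]
  have "(\<forall>a\<in>Mset n. \<psi> a = a) \<and> (\<forall>a\<in>Wset n. \<psi> a = a)"
  proof (cases "x \<in> Wset n")
    case True
    then have fixes_M: "\<forall>a\<in>Mset n. \<psi> a = a"
      using fixes_side[OF assms(4,5) lin(1) fin(2)] by blast
    then have "\<psi> (n + 1) = n + 1"
      using M(1) by blast
    with fixes_M show ?thesis
      using fixes_side[OF M(2) _ lin(2)[OF M(1)] fin(1)] by blast
  next
    case False
    then have "x \<in> Mset n"
      using assms(4) unfolding Iset_def by blast
    then have fixes_W: "\<forall>a\<in>Wset n. \<psi> a = a"
      using fixes_side[OF assms(4,5) lin(2) fin(1)] by blast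
    then have "\<psi> 1 = 1"
      using W(1) by blast
    with fixes_W show ?thesis
      using fixes_side[OF W(2) _ lin(1)[OF W(1)] fin(2)] by blast
  qed
  then have "\<psi> a = a" if "a \<in> Iset n" for a
    using that unfolding Iset_def by blast
  moreover have "\<psi> a = a" if "a \<notin> Iset n" for a
    using assms(3) that unfolding profile_automorphism_def by (blast intro: permutes_not_in)
  ultimately show ?thesis
    by (metis eq_id_iff)
qed

lemma finite_Iset: "finite (Iset n)"
  unfolding Iset_def Wset_def Mset_def by simp

lemma card_Iset: "card (Iset n) = 2 * n"
proof -
  have "Iset n = {1..2 * n}"
    unfolding Iset_def Wset_def Mset_def by auto
  then show ?thesis
    by simp
qed

lemma Wset_neq_Mset:
  assumes "0 < n"
  shows "Wset n \<noteq> Mset n"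
proof -
  have "1 \<in> Wset n" "1 \<notin> Mset n"
    using assms unfolding Wset_def Mset_def by auto
  then show ?thesis
    by blast
qed

theorem proposition15:
  fixes n :: nat and p :: "nat \<Rightarrow> nat rel" and \<phi> :: "nat \<Rightarrow> nat"
  assumes "n \<ge> 2"
    and "is_profile n p"
    and "\<phi> \<in> Stab n p"
  shows "(\<phi> \<in> Gsub n \<longrightarrow>
            (\<forall>x\<in>Iset n. card (cyc_orbit \<phi> x) = perm_ord \<phi>) \<and>
            perm_ord \<phi> * card (cyc_orbits \<phi> (Iset n)) = 2 * n)
       \<and> (\<phi> \<in> Gstar n - Gsub n \<longrightarrow>
            (\<forall>x\<in>Iset n. card (cyc_orbit \<phi> x) = perm_ord \<phi>) \<and>
            even (perm_ord \<phi>) \<and>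
            perm_ord \<phi> * card (cyc_orbits \<phi> (Iset n)) = 2 * n)"
proof -
  have aut: "profile_automorphism n p \<phi>"
    using Stab_imp_profile_automorphism[OF assms(3)] .
  then have perm: "\<phi> permutes Iset n"
    unfolding profile_automorphism_def by blast
  have free: "\<phi> ^^ k = id" if "x \<in> Iset n" "(\<phi> ^^ k) x = x" for x k
    using profile_automorphism_fixed_point_imp_id[OF assms(2) _ profile_automorphism_funpow[OF aut]]
      that assms(1) by simp
  have "permutation \<phi>"
    using perm finite_Iset permutation_permutes by blast
  have orbits: "\<forall>x\<in>Iset n. card (cyc_orbit \<phi> x) = perm_ord \<phi>"
    using card_cyc_orbit_eq_perm_ord[OF \<open>permutation \<phi>\<close>] free by blast
  have count: "perm_ord \<phi> * card (cyc_orbits \<phi> (Iset n)) = 2 * n"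
    using perm_ord_mult_card_cyc_orbits[OF perm finite_Iset free] card_Iset by simp
  have "even (perm_ord \<phi>)" if "\<phi> \<in> Gstar n - Gsub n"
  proof (rule even_perm_ord_if_swaps[OF \<open>permutation \<phi>\<close>])
    show "\<phi> ` Wset n = Mset n" "\<phi> ` Mset n = Wset n"
      using that perm unfolding Gstar_def Gsub_def by auto
    show "Wset n \<noteq> Mset n"
      using assms(1) by (simp add: Wset_neq_Mset)
  qed
  with orbits count show ?thesis
    by blast
qed

end
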